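(* Let $W$ be a weighing matrix of order $n$ and weight $k$ with $i$-th column $w_i$, and set $C_i=w_iw_i^T$ for $1\le i\le n$. Let $t\ge n$ and let $L=(l(i,j))_{i,j=1}^t$ be a Latin square of side $t$ on the symbol set $\{1,\dots,t\}$. If $t>n$, set $C_i=O$ (the $n\times n$ zero matrix) for $n+1\le i\le t$. Then the $tn\times tn$ block matrix $\widetilde W=(C_{l(i,j)})_{i,j=1}^t$, whose $(i,j)$ block is $C_{l(i,j)}$, is a weighing matrix of order $tn$ and weight $k^2$.
   Context: A weighing matrix of order $n$ and weight $k$ is an $n\times n$ matrix $W$ with entries in $\{1,-1,0\}$ such that $WW^T=kI_n$. A Latin square of side $t$ on symbol set $\{1,\dots,t\}$ is a $t\times t$ array in which each cell contains one symbol and each symbol occurs exactly once in each row and exactly once in each column. *)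

theory Defs
  imports Main
begin

text \<open>Matrices of order n are represented as functions nat \<Rightarrow> nat \<Rightarrow> int,
  with rows/columns indexed by 0..n-1 (entries outside the range are irrelevant).\<close>

definition weighing_matrix :: "nat \<Rightarrow> int \<Rightarrow> (nat \<Rightarrow> nat \<Rightarrow> int) \<Rightarrow> bool" where
  "weighing_matrix n k W \<longleftrightarrow>
     (\<forall>i<n. \<forall>j<n. W i j \<in> {-1, 0, 1}) \<and>
     (\<forall>i<n. \<forall>j<n. (\<Sum>l<n. W i l * W j l) = (if i = j then k else 0))"

definition latin_square :: "nat \<Rightarrow> (nat \<Rightarrow> nat \<Rightarrow> nat) \<Rightarrow> bool" where
  "latin_square t L \<longleftrightarrow>
     (\<forall>i<t. \<forall>j<t. L i j \<in> {1..t}) \<and>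
     (\<forall>i<t. \<forall>s\<in>{1..t}. \<exists>!j. j < t \<and> L i j = s) \<and>
     (\<forall>j<t. \<forall>s\<in>{1..t}. \<exists>!i. i < t \<and> L i j = s)"

definition col_outer :: "nat \<Rightarrow> (nat \<Rightarrow> nat \<Rightarrow> int) \<Rightarrow> nat \<Rightarrow> nat \<Rightarrow> nat \<Rightarrow> int" where
  "col_outer n W s a b = (if 1 \<le> s \<and> s \<le> n then W a (s - 1) * W b (s - 1) else 0)"

text \<open>The tn \<times> tn block matrix whose (i,j) block is C_{l(i,j)}; global index r
  corresponds to block r div n and position r mod n within the block.\<close>
definition block_latin :: "nat \<Rightarrow> (nat \<Rightarrow> nat \<Rightarrow> int) \<Rightarrow> (nat \<Rightarrow> nat \<Rightarrow> nat) \<Rightarrow> nat \<Rightarrow> nat \<Rightarrow> int" where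
  "block_latin n W L r c = col_outer n W (L (r div n) (c div n)) (r mod n) (c mod n)"

end

theory Submission
  imports Defs "Jordan_Normal_Form.Determinant"
begin

text \<open>Write \<open>C\<^sub>s\<close> for \<open>col_outer n W s\<close>. Orthogonality of the columns of \<open>W\<close> (which follows
  from that of the rows, since \<open>W W\<^sup>T = k I\<close> makes \<open>W\<^sup>T/k\<close> an inverse of \<open>W\<close>) gives
  \<open>C\<^sub>s C\<^sub>s\<^sub>' = k C\<^sub>s\<close> if \<open>s = s'\<close> and \<open>O\<close> otherwise, while \<open>\<Sum>\<^sub>s C\<^sub>s = W W\<^sup>T = k I\<close>.
  In the product of two block rows \<open>a, b\<close> of the block matrix, the \<open>j\<close>-th term is
  \<open>C\<^bsub>l(a,j)\<^esub> C\<^bsub>l(b,j)\<^esub>\<close>. For \<open>a \<noteq> b\<close> the symbols \<open>l(a,j)\<close> and \<open>l(b,j)\<close> always differ (Latin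
  columns), so the product vanishes; for \<open>a = b\<close> it is \<open>k \<Sum>\<^sub>j C\<^bsub>l(a,j)\<^esub> = k \<Sum>\<^sub>s C\<^sub>s = k\<^sup>2 I\<close>,
  since row \<open>a\<close> runs through all symbols (Latin rows).\<close>

lemma weighing_matrix_zero_weight:
  assumes "weighing_matrix n 0 W" and "i < n" and "j < n"
  shows "W i j = 0"
proof -
  have "(\<Sum>l<n. W i l * W i l) = 0"
    using assms unfolding weighing_matrix_def by auto
  then have "\<forall>l<n. W i l * W i l = 0"
    by (subst (asm) sum_nonneg_eq_0_iff) auto
  then show ?thesis
    using \<open>j < n\<close> by simp
qed

lemma weighing_matrix_columns_orthogonal:
  assumes wm: "weighing_matrix n k W" and ij: "i < n" "j < n"
  shows "(\<Sum>l<n. W l i * W l j) = (if i = j then k else 0)"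
proof (cases "k = 0")
  case True
  then show ?thesis
    using weighing_matrix_zero_weight[of n W] wm ij by simp
next
  case False
  define A where "A = mat n n (\<lambda>(i, j). rat_of_int (W i j))"
  define B where "B = mat n n (\<lambda>(i, j). rat_of_int (W j i) / of_int k)"
  have A: "A \<in> carrier_mat n n" and B: "B \<in> carrier_mat n n"
    unfolding A_def B_def by auto
  have "A * B = 1\<^sub>m n"
  proof (rule eq_matI)
    fix i j assume "i < dim_row (1\<^sub>m n)" "j < dim_col (1\<^sub>m n)"
    then have ij: "i < n" "j < n" by auto
    have "(A * B) $$ (i, j) = rat_of_int (\<Sum>l<n. W i l * W j l) / of_int k"
      using ij by (simp add: A_def B_def scalar_prod_def lessThan_atLeast0 sum_divide_distrib)
    then show "(A * B) $$ (i, j) = 1\<^sub>m n $$ (i, j)"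
      using wm ij False unfolding weighing_matrix_def by auto
  qed (auto simp: A_def B_def)
  then have "B * A = 1\<^sub>m n"
    using mat_mult_left_right_inverse[OF A B] by blast
  moreover have "rat_of_int (\<Sum>l<n. W l i * W l j) / of_int k = (B * A) $$ (i, j)"
    using ij by (simp add: A_def B_def scalar_prod_def lessThan_atLeast0 sum_divide_distrib)
  ultimately have "rat_of_int (\<Sum>l<n. W l i * W l j) = rat_of_int (if i = j then k else 0)"
    using ij False by (auto simp: divide_eq_eq split: if_splits)
  then show ?thesis
    by (simp only: of_int_eq_iff)
qed

lemma col_outer_mem:
  assumes "weighing_matrix n k W" and "a < n" and "b < n"
  shows "col_outer n W s a b \<in> {-1, 0, 1}"
proof (cases "1 \<le> s \<and> s \<le> n")
  case True
  then have "s - 1 < n" by auto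
  then have "W a (s - 1) \<in> {-1, 0, 1}" "W b (s - 1) \<in> {-1, 0, 1}"
    using assms unfolding weighing_matrix_def by blast+
  then show ?thesis
    using True unfolding col_outer_def by auto
qed (auto simp: col_outer_def)

lemma col_outer_mult_col_outer:
  assumes "weighing_matrix n k W" and "p < n" and "q < n"
  shows "(\<Sum>m<n. col_outer n W s p m * col_outer n W s' q m)
    = (if s = s' then k * col_outer n W s p q else 0)"
proof (cases "1 \<le> s \<and> s \<le> n \<and> 1 \<le> s' \<and> s' \<le> n")
  case True
  then have "s - 1 < n" "s' - 1 < n" and "s - 1 = s' - 1 \<longleftrightarrow> s = s'"
    by auto
  then have cols: "(\<Sum>m<n. W m (s - 1) * W m (s' - 1)) = (if s = s' then k else 0)"
    using weighing_matrix_columns_orthogonal[OF assms(1)] by simp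
  have "(\<Sum>m<n. col_outer n W s p m * col_outer n W s' q m)
      = W p (s - 1) * W q (s' - 1) * (\<Sum>m<n. W m (s - 1) * W m (s' - 1))"
    using True by (simp add: col_outer_def sum_distrib_left mult_ac)
  then show ?thesis
    unfolding cols using True by (simp add: col_outer_def)
next
  case False
  then show ?thesis
    by (auto simp: col_outer_def)
qed

lemma sum_col_outer:
  assumes "n \<le> t"
  shows "(\<Sum>s\<in>{1..t}. col_outer n W s p q) = (\<Sum>l<n. W p l * W q l)"
proof -
  have "(\<Sum>s\<in>{1..t}. col_outer n W s p q) = (\<Sum>s\<in>{1..n}. W p (s - 1) * W q (s - 1))"
    using assms by (intro sum.mono_neutral_cong_right) (auto simp: col_outer_def)
  also have "\<dots> = (\<Sum>s\<in>Suc ` {..<n}. W p (s - 1) * W q (s - 1))"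
    by (simp add: image_Suc_lessThan)
  also have "\<dots> = (\<Sum>l<n. W p l * W q l)"
    by (simp add: sum.reindex)
  finally show ?thesis .
qed

lemma latin_square_row_bij:
  assumes "latin_square t L" and "i < t"
  shows "bij_betw (L i) {..<t} {1..t}"
proof -
  have inj: "inj_on (L i) {..<t}"
    using assms unfolding latin_square_def inj_on_def by (metis atLeastAtMost_iff lessThan_iff)
  moreover have "L i ` {..<t} \<subseteq> {1..t}"
    using assms unfolding latin_square_def by auto
  ultimately have "L i ` {..<t} = {1..t}"
    by (intro card_subset_eq) (auto simp: card_image)
  with inj show ?thesis
    by (simp add: bij_betw_def)
qed

lemma latin_square_col_inj:
  assumes "latin_square t L" and "a < t" and "b < t" and "j < t" and "L a j = L b j"
  shows "a = b"
  using assms unfolding latin_square_def by (metis atLeastAtMost_iff)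

lemma sum_block_decomp:
  fixes g :: "nat \<Rightarrow> 'a :: comm_monoid_add"
  shows "(\<Sum>c<t * n. g c) = (\<Sum>j<t. \<Sum>m<n. g (j * n + m))"
proof -
  have "(\<Sum>m<n. g (j * n + m)) = sum g {j * n..<j * n + n}" for j
    using sum.shift_bounds_nat_ivl[of g 0 "j * n" n]
    by (simp add: lessThan_atLeast0 add.commute)
  then show ?thesis
    by (simp add: sum.nat_group)
qed

lemma block_latin_row_product:
  assumes "weighing_matrix n k W" and "r < t * n" and "r' < t * n"
  shows "(\<Sum>c<t * n. block_latin n W L r c * block_latin n W L r' c)
    = (\<Sum>j<t. if L (r div n) j = L (r' div n) j
              then k * col_outer n W (L (r div n) j) (r mod n) (r' mod n) else 0)"
proof -
  have n: "0 < n"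
    using assms(2) by (cases n) auto
  have "(\<Sum>m<n. block_latin n W L r (j * n + m) * block_latin n W L r' (j * n + m))
      = (if L (r div n) j = L (r' div n) j
         then k * col_outer n W (L (r div n) j) (r mod n) (r' mod n) else 0)" for j
    using col_outer_mult_col_outer[OF assms(1), of "r mod n" "r' mod n"] n
    by (simp add: block_latin_def)
  then show ?thesis
    by (simp add: sum_block_decomp)
qed

lemma block_latin_rows_same_block:
  assumes wm: "weighing_matrix n k W" and "n \<le> t" and ls: "latin_square t L"
    and r: "r < t * n" and r': "r' < t * n" and same: "r div n = r' div n"
  shows "(\<Sum>c<t * n. block_latin n W L r c * block_latin n W L r' c) = (if r = r' then k ^ 2 else 0)"
proof -
  have n: "0 < n"
    using r by (cases n) auto
  have a: "r div n < t"
    using r n by (simp add: div_less_iff_less_mult)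
  have "(\<Sum>j<t. k * col_outer n W (L (r div n) j) (r mod n) (r' mod n))
      = k * (\<Sum>s\<in>{1..t}. col_outer n W s (r mod n) (r' mod n))"
    using sum.reindex_bij_betw[OF latin_square_row_bij[OF ls a]]
    by (simp add: sum_distrib_left)
  also have "\<dots> = k * (\<Sum>l<n. W (r mod n) l * W (r' mod n) l)"
    by (simp only: sum_col_outer[OF assms(2)])
  also have "\<dots> = k * (if r mod n = r' mod n then k else 0)"
    using wm n unfolding weighing_matrix_def by simp
  also have "\<dots> = (if r = r' then k ^ 2 else 0)"
  proof -
    have "r mod n = r' mod n \<longleftrightarrow> r = r'"
      using same by (metis div_mult_mod_eq)
    then show ?thesis
      by (simp add: power2_eq_square)
  qed
  finally show ?thesis
    using block_latin_row_product[OF wm r r'] same by simp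
qed

lemma block_latin_rows_distinct_blocks:
  assumes wm: "weighing_matrix n k W" and ls: "latin_square t L"
    and r: "r < t * n" and r': "r' < t * n" and distinct: "r div n \<noteq> r' div n"
  shows "(\<Sum>c<t * n. block_latin n W L r c * block_latin n W L r' c) = 0"
proof -
  have n: "0 < n"
    using r by (cases n) auto
  have "r div n < t" "r' div n < t"
    using r r' n by (auto simp: div_less_iff_less_mult)
  then have "\<forall>j<t. L (r div n) j \<noteq> L (r' div n) j"
    using latin_square_col_inj[OF ls] distinct by blast
  then show ?thesis
    using block_latin_row_product[OF wm r r'] by simp
qed

theorem lemma3p2:
  fixes n t :: nat and k :: int
    and W :: "nat \<Rightarrow> nat \<Rightarrow> int" and L :: "nat \<Rightarrow> nat \<Rightarrow> nat"
  assumes "weighing_matrix n k W"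
    and "t \<ge> n"
    and "latin_square t L"
  shows "weighing_matrix (t * n) (k ^ 2) (block_latin n W L)"
  unfolding weighing_matrix_def
proof (intro conjI allI impI)
  fix r c assume "r < t * n" "c < t * n"
  then have "0 < n" by (cases n) auto
  then show "block_latin n W L r c \<in> {-1, 0, 1}"
    using col_outer_mem[OF assms(1)] by (simp add: block_latin_def)
next
  fix r r' assume r: "r < t * n" and r': "r' < t * n"
  show "(\<Sum>c<t * n. block_latin n W L r c * block_latin n W L r' c) = (if r = r' then k ^ 2 else 0)"
  proof (cases "r div n = r' div n")
    case True
    then show ?thesis
      using block_latin_rows_same_block[OF assms r r'] by blast
  next
    case False
    then have "r \<noteq> r'"
      by blast
    then show ?thesis
      using block_latin_rows_distinct_blocks[OF assms(1,3) r r' False] by simp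
  qed
qed

end
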